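(* Let $(q_n)$ and $(p_n)$ be sequences with $q_n\in(0,1)$, $p_n\in(q_n,1]$, $\lim_{n\to\infty}p_n=\lim_{n\to\infty}q_n=1$, $\lim_{n\to\infty}p_n^n=a$, $\lim_{n\to\infty}q_n^n=b$, and $\lim_{n\to\infty}1/[n]_{p_n,q_n}=0$. Then for each $f\in C[0,1]$, $\widetilde{M}_{n,k}^{(p_n,q_n)}(f;x)$ converges to $f(x)$ uniformly on $[0,1]$ as $n\to\infty$.
   Context: For $0<q<p\le1$: $[n]_{p,q}=\frac{p^n-q^n}{p-q}$; $[n]_{p,q}!=[1]_{p,q}\cdots[n]_{p,q}$, $[0]_{p,q}!=1$; $\begin{bmatrix}n\\k\end{bmatrix}_{p,q}=\frac{[n]_{p,q}!}{[k]_{p,q}![n-k]_{p,q}!}$; $(x+y)_{p,q}^n=\prod_{j=0}^{n-1}(p^jx+q^jy)$. The $(p,q)$-integral is $\int_0^a f(t)\,d_{p,q}t=(p-q)a\sum_{j=0}^\infty \frac{q^j}{p^{j+1}}f\!\left(\frac{q^j}{p^{j+1}}a\right)$. Define $m_{n,k}^{(p,q)}(x)=\frac{1}{p^{kn+n(n+1)/2}}\begin{bmatrix}n+k\\k\end{bmatrix}_{p,q}x^k(1-x)^{n+1}_{p,q}$ and $b_{n,k}^{(p,q)}(qt)=\frac{1}{p^{k(n-1)+n(n-1)/2}}\begin{bmatrix}n+k+1\\k\end{bmatrix}_{p,q}(qt)^k(1-qt)^n_{p,q}$. The operator is $$\widetilde{M}_{n,k}^{(p,q)}(f;x)=\frac{[n+1]_{p,q}}{p^n}\sum_{k=0}^\infty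 m_{n,k}^{(p,q)}(x)\,(pq)^{-k}\int_0^1 b_{n,k}^{(p,q)}(qt)f(t)\,d_{p,q}t,\quad 0\le x<1,$$ and $\widetilde{M}_{n,k}^{(p,q)}(f;1)=f(1)$. *)

theory Defs
  imports "HOL-Analysis.Analysis"
begin

definition pq_int :: "real \<Rightarrow> real \<Rightarrow> nat \<Rightarrow> real" where
  "pq_int p q n = (p ^ n - q ^ n) / (p - q)"

definition pq_fact :: "real \<Rightarrow> real \<Rightarrow> nat \<Rightarrow> real" where
  "pq_fact p q n = (\<Prod>i = 1..n. pq_int p q i)"

definition pq_binom :: "real \<Rightarrow> real \<Rightarrow> nat \<Rightarrow> nat \<Rightarrow> real" where
  "pq_binom p q n k = pq_fact p q n / (pq_fact p q k * pq_fact p q (n - k))"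

definition pq_pow :: "real \<Rightarrow> real \<Rightarrow> real \<Rightarrow> real \<Rightarrow> nat \<Rightarrow> real" where
  "pq_pow p q x y n = (\<Prod>j<n. p ^ j * x + q ^ j * y)"

definition pq_integral :: "real \<Rightarrow> real \<Rightarrow> real \<Rightarrow> (real \<Rightarrow> real) \<Rightarrow> real" where
  "pq_integral p q a f =
     (p - q) * a * (\<Sum>j. q ^ j / p ^ (j + 1) * f (q ^ j / p ^ (j + 1) * a))"

definition m_pq :: "real \<Rightarrow> real \<Rightarrow> nat \<Rightarrow> nat \<Rightarrow> real \<Rightarrow> real" where
  "m_pq p q n k x =
     1 / p ^ (k * n + n * (n + 1) div 2) * pq_binom p q (n + k) k * x ^ k
       * pq_pow p q 1 (- x) (n + 1)"

text \<open>b_{n,k}^{(p,q)}(s), to be evaluated at s = q t.  The exponent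
  k(n-1) + n(n-1)/2 is taken as a real number (so it is correct also for n = 0).\<close>
definition b_pq :: "real \<Rightarrow> real \<Rightarrow> nat \<Rightarrow> nat \<Rightarrow> real \<Rightarrow> real" where
  "b_pq p q n k s =
     1 / p powr (real k * (real n - 1) + real n * (real n - 1) / 2)
       * pq_binom p q (n + k + 1) k * s ^ k * pq_pow p q 1 (- s) n"

text \<open>Extension of a function given on [0,1] to the whole line by clamping;
  needed because the (p,q)-integral over [0,1] samples the point 1/p \<ge> 1.\<close>
definition ext01 :: "(real \<Rightarrow> real) \<Rightarrow> real \<Rightarrow> real" where
  "ext01 f t = f (max 0 (min 1 t))"

definition M_pq :: "real \<Rightarrow> real \<Rightarrow> nat \<Rightarrow> (real \<Rightarrow> real) \<Rightarrow> real \<Rightarrow> real" where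
  "M_pq p q n f x =
     (if x = 1 then f 1
      else pq_int p q (n + 1) / p ^ n *
        (\<Sum>k. m_pq p q n k x * (p * q) powi (- int k)
               * pq_integral p q 1 (\<lambda>t. b_pq p q n k (q * t) * ext01 f t)))"

end

theory Submission
  imports Defs
begin

text \<open>Put \<open>r = q/p\<close>. The \<open>(p,q)\<close>-integral over \<open>[0,1]\<close> is a series over the nodes
  \<open>r^j/p\<close>, so for \<open>x < 1\<close> the operator is a double average
  \<open>\<Sum>k. w\<^sub>k(x) \<Sum>j. v\<^bsub>k j\<^esub> f(r^j/p)\<close> with nonnegative weights which, by the negative
  \<open>r\<close>-binomial theorem, sum to \<open>1\<close>. The same theorem gives the first two moments of both
  averages as ratios of \<open>r\<close>-integers, and the second central moment
  \<open>\<Sum>k. w\<^sub>k(x) \<Sum>j. v\<^bsub>k j\<^esub> (r^j/p - x)\<^sup>2\<close> is bounded, uniformly in \<open>x\<close>, by a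
  quantity of order \<open>(1/p - 1 + 1/[n]\<^sub>r)\<^sup>2 + 1/[n]\<^sub>r\<close>. As \<open>1/[n]\<^sub>r \<le> 1/[n]\<^bsub>p,q\<^esub> \<longrightarrow> 0\<close>,
  Korovkin's estimate \<open>|f t - f x| \<le> \<epsilon> + c (t - x)\<^sup>2\<close> for continuous \<open>f\<close> yields uniform
  convergence.\<close>

text \<open>\<open>qbinom r n k\<close> is the Gaussian binomial coefficient \<open>[n+k, k]\<^sub>r\<close>, \<open>qpoch r z m\<close> the
  \<open>r\<close>-Pochhammer symbol \<open>(z; r)\<^sub>m\<close>, and \<open>qratio r n k = [k]\<^sub>r / [n+k]\<^sub>r\<close>.\<close>

definition qbinom :: "real \<Rightarrow> nat \<Rightarrow> nat \<Rightarrow> real" where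
  "qbinom r n k = (\<Prod>i = 1..k. (1 - r ^ (n + i)) / (1 - r ^ i))"

definition qpoch :: "real \<Rightarrow> real \<Rightarrow> nat \<Rightarrow> real" where
  "qpoch r z m = (\<Prod>i<m. 1 - r ^ i * z)"

definition qratio :: "real \<Rightarrow> nat \<Rightarrow> nat \<Rightarrow> real" where
  "qratio r n k = (1 - r ^ k) / (1 - r ^ (n + k))"

text \<open>For \<open>r = q/p\<close> one has \<open>m\<^bsub>n,k\<^esub>(x) = mweight r n x k\<close>, and the node \<open>r^j/p\<close> of the
  \<open>(p,q)\<close>-integral against \<open>b\<^bsub>n,k\<^esub>(qt)\<close> carries a weight proportional to
  \<open>bweight r n k j\<close> (see \<open>M_pq_eq\<close>).\<close>

definition mweight :: "real \<Rightarrow> nat \<Rightarrow> real \<Rightarrow> nat \<Rightarrow> real" where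
  "mweight r n x k = qbinom r n k * x ^ k * qpoch r x (Suc n)"

definition bweight :: "real \<Rightarrow> nat \<Rightarrow> nat \<Rightarrow> nat \<Rightarrow> real" where
  "bweight r n k j =
     qbinom r (Suc n) k * (1 - r ^ Suc n) * (r ^ j) ^ Suc k * qpoch r (r ^ Suc j) n"

lemma qbinom_0_right [simp]: "qbinom r n 0 = 1"
  by (simp add: qbinom_def)

lemma qbinom_Suc_right:
  "qbinom r n (Suc k) = qbinom r n k * (1 - r ^ (n + Suc k)) / (1 - r ^ Suc k)"
  by (simp add: qbinom_def)

lemma qpoch_Suc: "qpoch r z (Suc m) = qpoch r z m * (1 - r ^ m * z)"
  by (simp add: qpoch_def)

lemma qpoch_Suc_shift: "qpoch r z (Suc m) = (1 - z) * qpoch r (r * z) m"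
  unfolding qpoch_def prod.lessThan_Suc_shift by (simp add: mult_ac)

locale qbase =
  fixes r :: real
  assumes r_pos: "0 < r" and r_less_1: "r < 1"
begin

text \<open>The simplifier rewrites \<open>r ^ Suc m\<close> to \<open>r * r ^ m\<close>, so some facts about powers of \<open>r\<close>
  are also stated in that form.\<close>

lemma power_r_pos [simp]: "0 < r ^ m"
  using r_pos by simp

lemma power_r_le_1 [simp]: "r ^ m \<le> 1"
  using r_pos r_less_1 by (simp add: power_le_one)

lemma power_r_less_1_iff [simp]: "r ^ m < 1 \<longleftrightarrow> 0 < m"
  using r_pos r_less_1 by (simp add: power_less_one_iff)

lemma power_r_eq_1_iff [simp]: "r ^ m = 1 \<longleftrightarrow> m = 0"
  using power_r_less_1_iff[of m] by (cases m) auto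

lemma r_mult_power_r_less_1 [simp]: "r * r ^ m < 1"
  using power_r_less_1_iff[of "Suc m"] by simp

lemma r_mult_power_r_le_1 [simp]: "r * r ^ m \<le> 1"
  using r_mult_power_r_less_1[of m] by linarith

lemma r_mult_power_r_neq_1 [simp]: "r * r ^ m \<noteq> 1"
  using r_mult_power_r_less_1[of m] by linarith

lemma r_le_1 [simp]: "r \<le> 1"
  using r_less_1 by simp

lemma r_neq_0 [simp]: "r \<noteq> 0"
  using r_pos by simp

lemma r_nonneg [simp]: "0 \<le> r"
  using r_pos by simp

declare r_pos [simp] r_less_1 [simp]

lemma power_r_antimono: "m \<le> m' \<Longrightarrow> r ^ m' \<le> r ^ m"
  using r_pos r_less_1 by (simp add: power_decreasing)

lemma one_minus_power_r_pos: "0 < m \<Longrightarrow> 0 < 1 - r ^ m"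
  by simp

lemma qbinom_0_left [simp]: "qbinom r 0 k = 1"
  unfolding qbinom_def by (intro prod.neutral) (auto simp: one_minus_power_r_pos)

lemma qbinom_Suc_left:
  "qbinom r (Suc n) k = qbinom r n k * (1 - r ^ (Suc n + k)) / (1 - r ^ Suc n)"
proof (induction k)
  case (Suc k)
  have "1 - r ^ Suc n \<noteq> 0" "1 - r ^ Suc k \<noteq> 0" "1 - r ^ (Suc n + k) \<noteq> 0"
    using one_minus_power_r_pos[of "Suc n"] one_minus_power_r_pos[of "Suc k"]
      one_minus_power_r_pos[of "Suc n + k"] by auto
  then show ?case
    unfolding qbinom_Suc_right Suc by (simp add: field_simps)
qed (simp add: one_minus_power_r_pos)

lemma qbinom_nonneg: "0 \<le> qbinom r n k"
  unfolding qbinom_def by (intro prod_nonneg) (auto intro!: divide_nonneg_pos)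

lemma qbinom_le_prod: "qbinom r n k \<le> (\<Prod>i = 1..n. 1 / (1 - r ^ i))"
proof (induction n)
  case (Suc n)
  have "qbinom r (Suc n) k = qbinom r n k * ((1 - r ^ (Suc n + k)) / (1 - r ^ Suc n))"
    by (simp add: qbinom_Suc_left)
  also have "\<dots> \<le> (\<Prod>i = 1..n. 1 / (1 - r ^ i)) * (1 / (1 - r ^ Suc n))"
    using Suc.IH qbinom_nonneg
    by (intro mult_mono divide_right_mono) (auto intro!: prod_nonneg)
  finally show ?case by simp
qed simp

lemma qbinom_pascal:
  "qbinom r (Suc n) (Suc k) = qbinom r n (Suc k) + r ^ Suc n * qbinom r (Suc n) k"
proof -
  have "1 - r ^ Suc n \<noteq> 0" "1 - r ^ Suc k \<noteq> 0"
    using one_minus_power_r_pos[of "Suc n"] one_minus_power_r_pos[of "Suc k"] by auto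
  then show ?thesis
    unfolding qbinom_Suc_left qbinom_Suc_right
    by (simp add: field_simps power_add)
qed

lemma qpoch_pos:
  assumes "0 \<le> z" "z < 1"
  shows "0 < qpoch r z m"
proof -
  from assms have "r ^ i * z < 1" for i
    using mult_left_le_one_le[of z "r ^ i"] by simp
  then show ?thesis
    unfolding qpoch_def by (intro prod_pos) simp
qed

lemma qbinom_series_summable:
  assumes "0 \<le> z" "z < 1"
  shows "summable (\<lambda>k. qbinom r n k * z ^ k)"
proof (rule summable_comparison_test)
  show "\<exists>N. \<forall>k\<ge>N. norm (qbinom r n k * z ^ k) \<le> (\<Prod>i = 1..n. 1 / (1 - r ^ i)) * z ^ k"
    using qbinom_le_prod qbinom_nonneg assms by (auto intro!: mult_right_mono)
  show "summable (\<lambda>k. (\<Prod>i = 1..n. 1 / (1 - r ^ i)) * z ^ k)"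
    using assms by (intro summable_mult summable_geometric) auto
qed

lemma qbinom_series_sums:
  assumes "0 \<le> z" "z < 1"
  shows "(\<lambda>k. qbinom r n k * z ^ k) sums (1 / qpoch r z (Suc n))"
proof (induction n)
  case 0
  show ?case
    using geometric_sums[of z] assms by (simp add: qpoch_def)
next
  case (Suc n)
  define S where "S = (\<Sum>k. qbinom r (Suc n) k * z ^ k)"
  have S_sums: "(\<lambda>k. qbinom r (Suc n) k * z ^ k) sums S"
    unfolding S_def using qbinom_series_summable[OF assms] by (rule summable_sums)
  have "(\<lambda>k. qbinom r (Suc n) (Suc k) * z ^ Suc k) sums (S - 1)"
    using S_sums by (subst sums_Suc_iff) simp
  moreover have "(\<lambda>k. qbinom r n (Suc k) * z ^ Suc k + r ^ Suc n * z * (qbinom r (Suc n) k * z ^ k))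
      sums (1 / qpoch r z (Suc n) - 1 + r ^ Suc n * z * S)"
    using Suc.IH by (intro sums_add sums_mult S_sums) (subst sums_Suc_iff, simp)
  moreover have "(\<lambda>k. qbinom r (Suc n) (Suc k) * z ^ Suc k) =
      (\<lambda>k. qbinom r n (Suc k) * z ^ Suc k + r ^ Suc n * z * (qbinom r (Suc n) k * z ^ k))"
    unfolding qbinom_pascal by (simp add: algebra_simps)
  ultimately have "S - 1 = 1 / qpoch r z (Suc n) - 1 + r ^ Suc n * z * S"
    using sums_unique2 by metis
  then have "S * (1 - r ^ Suc n * z) = 1 / qpoch r z (Suc n)"
    by (simp add: algebra_simps)
  moreover have "0 < 1 - r ^ Suc n * z" "0 < qpoch r z (Suc n)"
    using assms qpoch_pos mult_left_le_one_le[of z "r ^ Suc n"] by auto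
  ultimately have "S = 1 / (qpoch r z (Suc n) * (1 - r ^ Suc n * z))"
    by (simp add: field_simps)
  then show ?case
    using S_sums qpoch_Suc[of r z "Suc n"] by simp
qed

lemma qpoch_power_eq_qbinom: "qpoch r (r ^ Suc j) n = qbinom r n j * qpoch r r n"
proof (induction n)
  case (Suc n)
  have "qpoch r (r ^ Suc j) (Suc n) = qbinom r n j * qpoch r r n * (1 - r ^ (Suc n + j))"
    unfolding qpoch_Suc Suc by (simp add: power_add mult_ac)
  also have "\<dots> = qbinom r (Suc n) j * qpoch r r (Suc n)"
    unfolding qbinom_Suc_left qpoch_Suc by (simp add: mult_ac)
  finally show ?case .
qed (simp add: qpoch_def)

lemma qpoch_power_ratio:
  "qpoch r (r ^ k) (Suc m) / qpoch r (r ^ Suc k) (Suc m) = qratio r (Suc m) k"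
proof -
  have "qpoch r (r ^ k) (Suc m) * (1 - r ^ (Suc m + k)) = (1 - r ^ k) * qpoch r (r ^ Suc k) (Suc m)"
    using qpoch_Suc[of r "r ^ k" "Suc m"] qpoch_Suc_shift[of r "r ^ k" "Suc m"]
    by (simp add: power_add)
  moreover have "0 < qpoch r (r ^ Suc k) (Suc m)" "0 < 1 - r ^ (Suc m + k)"
    using qpoch_pos by auto
  ultimately show ?thesis
    unfolding qratio_def by (simp add: field_simps)
qed

lemma qratio_nonneg: "0 \<le> qratio r n k"
  unfolding qratio_def by (simp add: divide_nonneg_nonneg)

lemma qratio_le_1: "qratio r n k \<le> 1"
  unfolding qratio_def using power_r_antimono[of k "n + k"]
  by (cases "n + k = 0") (auto simp: divide_le_eq_1)

lemma ratio_steps_bounded: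
  assumes s: "0 \<le> s" "s \<le> 1" and t: "0 \<le> t" "t < 1"
  shows "0 \<le> (1 - r * s) / (1 - r * t * s) - (1 - s) / (1 - t * s)"
    and "(1 - r * s) / (1 - r * t * s) - (1 - s) / (1 - t * s) \<le> (1 - r) / (1 - t)"
    and "0 \<le> (1 - s) / (1 - t * s) - (1 - s) / (1 - r * t * s)"
    and "(1 - s) / (1 - t * s) - (1 - s) / (1 - r * t * s) \<le> (1 - r) / (1 - t)"
proof -
  define D1 where "D1 = 1 - t * s"
  define D2 where "D2 = 1 - r * t * s"
  have "t * s \<le> t"
    using s t mult_left_le[of s t] by simp
  moreover have "r * t * s \<le> t * s"
    using s t mult_left_le_one_le[of "t * s" r] by (simp add: mult.assoc)
  ultimately have D: "1 - t \<le> D1" "1 - t \<le> D2" "0 < D1" "0 < D2"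
    using t unfolding D1_def D2_def by auto
  have bound: "c * a / (D1 * D2) \<le> c / (1 - t)" if "0 \<le> c" "0 \<le> a" "a \<le> D1" for a c
  proof -
    have "c * a / (D1 * D2) \<le> c * D1 / (D1 * (1 - t))"
      using that D t by (intro frac_le mult_left_mono mult_right_mono) auto
    then show ?thesis using D by simp
  qed
  have "(1 - r * s) / D2 - (1 - s) / D1 = (1 - r) * (s * (1 - t)) / (D1 * D2)"
    using D unfolding D1_def D2_def by (simp add: field_simps)
  moreover have "s * (1 - t) \<le> D1"
    using s unfolding D1_def by (simp add: algebra_simps)
  ultimately show "0 \<le> (1 - r * s) / D2 - (1 - s) / D1"
    and "(1 - r * s) / D2 - (1 - s) / D1 \<le> (1 - r) / (1 - t)"
    using s t D bound by auto
  have "(1 - s) / D1 - (1 - s) / D2 = (1 - r) * ((1 - s) * (t * s)) / (D1 * D2)"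
    using D unfolding D1_def D2_def by (simp add: field_simps)
  moreover have "(1 - s) * (t * s) \<le> D1"
  proof -
    have "(1 - s) * (t * s) \<le> 1 - s" "t * s \<le> s"
      using s t mult_left_le[of "t * s" "1 - s"] mult_left_le_one_le[of s t] by auto
    then show ?thesis unfolding D1_def by linarith
  qed
  ultimately show "0 \<le> (1 - s) / D1 - (1 - s) / D2"
    and "(1 - s) / D1 - (1 - s) / D2 \<le> (1 - r) / (1 - t)"
    using s t D bound by auto
qed

lemma one_minus_r_div_antimono:
  "0 < n \<Longrightarrow> n \<le> m \<Longrightarrow> (1 - r) / (1 - r ^ m) \<le> (1 - r) / (1 - r ^ n)"
  using power_r_antimono[of n m] by (intro divide_left_mono) auto

lemma qratio_Suc_right_diff:
  assumes "0 < n"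
  shows "0 \<le> qratio r n (Suc k) - qratio r n k"
    and "qratio r n (Suc k) - qratio r n k \<le> (1 - r) / (1 - r ^ n)"
proof -
  have "qratio r n (Suc k) - qratio r n k =
      (1 - r * r ^ k) / (1 - r * r ^ n * r ^ k) - (1 - r ^ k) / (1 - r ^ n * r ^ k)"
    by (simp add: qratio_def power_add mult_ac)
  then show "0 \<le> qratio r n (Suc k) - qratio r n k"
    and "qratio r n (Suc k) - qratio r n k \<le> (1 - r) / (1 - r ^ n)"
    using ratio_steps_bounded(1,2)[of "r ^ k" "r ^ n"] assms by simp_all
qed

lemma qratio_Suc_left_diff:
  assumes "0 < n"
  shows "0 \<le> qratio r n k - qratio r (Suc n) k"
    and "qratio r n k - qratio r (Suc n) k \<le> (1 - r) / (1 - r ^ n)"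
proof -
  have "qratio r n k - qratio r (Suc n) k =
      (1 - r ^ k) / (1 - r ^ n * r ^ k) - (1 - r ^ k) / (1 - r * r ^ n * r ^ k)"
    by (simp add: qratio_def power_add mult_ac)
  then show "0 \<le> qratio r n k - qratio r (Suc n) k"
    and "qratio r n k - qratio r (Suc n) k \<le> (1 - r) / (1 - r ^ n)"
    using ratio_steps_bounded(3,4)[of "r ^ k" "r ^ n"] assms by simp_all
qed

lemma qratio_Suc_Suc_diff:
  assumes "0 < n"
  shows "\<bar>qratio r (Suc n) (Suc k) - qratio r n k\<bar> \<le> (1 - r) / (1 - r ^ n)"
proof -
  have "qratio r (Suc n) (Suc k) - qratio r (Suc n) k \<le> (1 - r) / (1 - r ^ n)"
    using qratio_Suc_right_diff(2)[of "Suc n" k] one_minus_r_div_antimono[of n "Suc n"] assms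
    by simp
  then show ?thesis
    using qratio_Suc_right_diff(1)[of "Suc n" k] qratio_Suc_left_diff[OF assms, of k] by linarith
qed

lemma mweight_nonneg: "0 \<le> x \<Longrightarrow> x < 1 \<Longrightarrow> 0 \<le> mweight r n x k"
  unfolding mweight_def using qbinom_nonneg qpoch_pos[of x "Suc n"] by simp

lemma mweight_sums:
  assumes "0 \<le> x" "x < 1"
  shows "(\<lambda>k. mweight r n x k) sums 1"
  using sums_mult2[OF qbinom_series_sums[OF assms, of n], of "qpoch r x (Suc n)"]
    qpoch_pos[OF assms, of "Suc n"]
  unfolding mweight_def by simp

lemma qbinom_Suc_mult_qratio: "qbinom r n (Suc k) * qratio r n (Suc k) = qbinom r n k"
  using one_minus_power_r_pos[of "n + Suc k"] one_minus_power_r_pos[of "Suc k"]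
  unfolding qbinom_Suc_right qratio_def by simp

lemma mweight_Suc_qratio: "mweight r n x (Suc k) * qratio r n (Suc k) = x * mweight r n x k"
  using qbinom_Suc_mult_qratio[of n k] unfolding mweight_def by (simp add: mult_ac)

lemma mweight_qratio_sums:
  assumes "0 \<le> x" "x < 1"
  shows "(\<lambda>k. mweight r n x k * qratio r n k) sums x"
proof -
  have "(\<lambda>k. mweight r n x (Suc k) * qratio r n (Suc k)) sums x"
    using sums_mult[OF mweight_sums[OF assms], of x n] by (simp add: mweight_Suc_qratio)
  then show ?thesis by (subst (asm) sums_Suc_iff) (simp add: qratio_def)
qed

text \<open>The truncated \<open>k - 1\<close> is harmless since \<open>qratio r n 0 = 0\<close>.\<close>

lemma mweight_qratio_qratio_sums:
  assumes "0 \<le> x" "x < 1"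
  shows "(\<lambda>k. mweight r n x k * qratio r n k * qratio r n (k - 1)) sums x\<^sup>2"
proof -
  define F where "F = (\<lambda>k. mweight r n x k * qratio r n k * qratio r n (k - 1))"
  have "(\<lambda>k. F (Suc (Suc k))) sums x\<^sup>2"
    using sums_mult[OF mweight_sums[OF assms], of "x\<^sup>2" n]
    unfolding F_def by (simp add: mweight_Suc_qratio power2_eq_square mult.assoc)
  then have "(\<lambda>k. F (Suc k)) sums x\<^sup>2"
    using sums_Suc_iff[of "\<lambda>k. F (Suc k)"] by (simp add: F_def qratio_def)
  moreover have "F 0 = 0"
    by (simp add: F_def qratio_def)
  ultimately have "F sums x\<^sup>2"
    using sums_Suc_iff[of F] by simp
  then show ?thesis
    unfolding F_def .
qed

lemma bweight_nonneg: "0 \<le> bweight r n k j"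
  unfolding bweight_def using qbinom_nonneg qpoch_pos[of "r ^ Suc j" n] by simp

lemma bweight_power_moment_sums:
  "(\<lambda>j. bweight r n k j * (r ^ j) ^ i) sums
     (qpoch r (r ^ Suc k) (Suc n) / qpoch r (r ^ (Suc k + i)) (Suc n))"
proof -
  define c where "c = qbinom r (Suc n) k * (1 - r ^ Suc n) * qpoch r r n"
  have "c = qpoch r (r ^ Suc k) (Suc n)"
    unfolding c_def qpoch_power_eq_qbinom[of k "Suc n"] qpoch_Suc[of r r n] by (simp add: mult_ac)
  moreover have "bweight r n k j * (r ^ j) ^ i = c * (qbinom r n j * (r ^ (Suc k + i)) ^ j)" for j
  proof -
    have "(r ^ j) ^ Suc k * (r ^ j) ^ i = (r ^ (Suc k + i)) ^ j"
      by (simp only: power_add[symmetric] power_mult[symmetric]) (simp add: algebra_simps)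
    then show ?thesis
      unfolding bweight_def c_def qpoch_power_eq_qbinom by (simp add: mult_ac)
  qed
  moreover have "(\<lambda>j. c * (qbinom r n j * (r ^ (Suc k + i)) ^ j)) sums
      (c * (1 / qpoch r (r ^ (Suc k + i)) (Suc n)))"
    by (intro sums_mult qbinom_series_sums) simp_all
  ultimately show ?thesis by simp
qed

lemma bweight_sums: "(\<lambda>j. bweight r n k j) sums 1"
  using bweight_power_moment_sums[of n k 0] qpoch_pos[of "r ^ Suc k" "Suc n"] by simp

lemma bweight_mean_sums: "(\<lambda>j. bweight r n k j * r ^ j) sums qratio r (Suc n) (Suc k)"
  using bweight_power_moment_sums[of n k 1] qpoch_power_ratio[of "Suc k" n] by simp

lemma bweight_power2_sums:
  "(\<lambda>j. bweight r n k j * (r ^ j)\<^sup>2) sums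
     (qratio r (Suc n) (Suc k) * qratio r (Suc n) (Suc (Suc k)))"
proof -
  have "0 < qpoch r (r ^ Suc (Suc k)) (Suc n)"
    using power_r_less_1_iff[of "Suc (Suc k)"] by (intro qpoch_pos) (simp_all del: power_Suc)
  then have "qpoch r (r ^ Suc k) (Suc n) / qpoch r (r ^ (Suc k + 2)) (Suc n) =
      qpoch r (r ^ Suc k) (Suc n) / qpoch r (r ^ Suc (Suc k)) (Suc n) *
      (qpoch r (r ^ Suc (Suc k)) (Suc n) / qpoch r (r ^ Suc (Suc (Suc k))) (Suc n))"
    by (simp add: numeral_2_eq_2)
  then show ?thesis
    using bweight_power_moment_sums[of n k 2] by (simp only: qpoch_power_ratio)
qed

end

lemma weighted_mean_deviation:
  fixes w g h :: "nat \<Rightarrow> real"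
  assumes w_nonneg: "\<And>j. 0 \<le> w j" and w_sums: "w sums 1"
    and dev: "\<And>j. \<bar>g j - y\<bar> \<le> h j" and summable_wh: "summable (\<lambda>j. w j * h j)"
  shows "summable (\<lambda>j. w j * g j)" and "\<bar>(\<Sum>j. w j * g j) - y\<bar> \<le> (\<Sum>j. w j * h j)"
proof -
  have abs_le: "\<bar>w j * (g j - y)\<bar> \<le> w j * h j" for j
    using w_nonneg dev by (simp add: abs_mult mult_left_mono)
  then have summable_dev: "summable (\<lambda>j. w j * (g j - y))"
    by (intro summable_comparison_test[OF _ summable_wh]) auto
  have sums_g: "(\<lambda>j. w j * (g j - y) + w j * y) sums ((\<Sum>j. w j * (g j - y)) + 1 * y)"
    by (intro sums_add summable_sums summable_dev sums_mult2 w_sums)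
  then show "summable (\<lambda>j. w j * g j)"
    by (simp add: algebra_simps sums_summable)
  have "(\<Sum>j. w j * g j) - y = (\<Sum>j. w j * (g j - y))"
    using sums_g by (simp add: algebra_simps sums_iff)
  also have "\<bar>\<dots>\<bar> \<le> (\<Sum>j. w j * h j)"
  proof -
    have "summable (\<lambda>j. \<bar>w j * (g j - y)\<bar>)"
      by (rule summable_comparison_test[OF _ summable_wh]) (use abs_le in auto)
    then show ?thesis
      using abs_le summable_wh by (intro order_trans[OF summable_rabs suminf_le]) auto
  qed
  finally show "\<bar>(\<Sum>j. w j * g j) - y\<bar> \<le> (\<Sum>j. w j * h j)" .
qed

text \<open>The error of a composition of two averaging operators is controlled by its second
  moment: this is the quantitative core of Korovkin's theorem.\<close>

lemma double_average_deviation: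
  fixes A m t g :: "nat \<Rightarrow> real" and B :: "nat \<Rightarrow> nat \<Rightarrow> real"
  assumes "\<And>k. 0 \<le> A k" "A sums 1" "\<And>k j. 0 \<le> B k j" "\<And>k. B k sums 1"
    and B_moment: "\<And>k. (\<lambda>j. B k j * (t j - x)\<^sup>2) sums m k"
    and summable_Am: "summable (\<lambda>k. A k * m k)"
    and dev: "\<And>j. \<bar>g j - y\<bar> \<le> \<epsilon> + c * (t j - x)\<^sup>2" and "0 \<le> c"
  shows "\<bar>(\<Sum>k. A k * (\<Sum>j. B k j * g j)) - y\<bar> \<le> \<epsilon> + c * (\<Sum>k. A k * m k)"
proof -
  have inner_sums: "(\<lambda>j. B k j * (\<epsilon> + c * (t j - x)\<^sup>2)) sums (\<epsilon> + c * m k)" for k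
    using sums_add[OF sums_mult2[OF assms(4), where c=\<epsilon>] sums_mult[OF B_moment, where c=c]]
    by (simp add: algebra_simps)
  have "\<bar>(\<Sum>j. B k j * g j) - y\<bar> \<le> \<epsilon> + c * m k" for k
    using weighted_mean_deviation(2)[OF assms(3,4) dev sums_summable[OF inner_sums]]
      inner_sums by (simp add: sums_iff)
  moreover have outer_sums: "(\<lambda>k. A k * (\<epsilon> + c * m k)) sums (\<epsilon> + c * (\<Sum>k. A k * m k))"
    using sums_add[OF sums_mult2[OF assms(2), where c=\<epsilon>] sums_mult[OF summable_sums[OF summable_Am], where c=c]]
    by (simp add: algebra_simps)
  ultimately show ?thesis
    using weighted_mean_deviation(2)[OF assms(1,2), of "\<lambda>k. \<Sum>j. B k j * g j" y
        "\<lambda>k. \<epsilon> + c * m k"] sums_summable[OF outer_sums] sums_unique[OF outer_sums]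
    by simp
qed

text \<open>Applied with \<open>a, b\<close> the moment ratios of the inner average, \<open>u, v\<close> those of the outer
  one and \<open>\<rho> = 1/p\<close>: the right-hand side is affine in \<open>u\<close> and \<open>u * v\<close>, whose outer averages
  are known exactly.\<close>

lemma quadratic_deviation_le:
  fixes a b u v x \<rho> e :: real
  assumes a: "0 \<le> a" "a \<le> 1" and b: "0 \<le> b - a" "b - a \<le> e" and au: "\<bar>a - u\<bar> \<le> e"
    and u: "0 \<le> u" and uv: "u - v \<le> e" and \<rho>: "1 \<le> \<rho>"
  shows "a * b * \<rho>\<^sup>2 - 2 * x * \<rho> * a + x\<^sup>2
    \<le> 2 * (\<rho> - 1 + e)\<^sup>2 + e * \<rho>\<^sup>2 + 2 * (u * v + e * u - 2 * x * u + x\<^sup>2)"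
proof -
  have split: "a * b * \<rho>\<^sup>2 - 2 * x * \<rho> * a + x\<^sup>2 = (\<rho> * a - x)\<^sup>2 + \<rho>\<^sup>2 * (a * (b - a))"
    by (simp add: algebra_simps power2_eq_square)
  have variance: "\<rho>\<^sup>2 * (a * (b - a)) \<le> e * \<rho>\<^sup>2"
    using a b mult_mono[of a 1 "b - a" e] mult_left_mono[of "a * (b - a)" e "\<rho>\<^sup>2"]
    by (simp add: mult.commute)
  have parallelogram: "(\<rho> * a - x)\<^sup>2 \<le> 2 * (\<rho> * a - u)\<^sup>2 + 2 * (u - x)\<^sup>2"
    using sum_squares_ge_zero[of "\<rho> * a - 2 * u + x" 0]
    by (simp add: algebra_simps power2_eq_square)
  have "\<bar>\<rho> * a - u\<bar> \<le> \<bar>(\<rho> - 1) * a\<bar> + \<bar>a - u\<bar>"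
    using abs_triangle_ineq[of "(\<rho> - 1) * a" "a - u"] by (simp add: algebra_simps)
  also have "\<bar>(\<rho> - 1) * a\<bar> = (\<rho> - 1) * a"
    using a \<rho> by simp
  also have "(\<rho> - 1) * a + \<bar>a - u\<bar> \<le> \<rho> - 1 + e"
    using a \<rho> au mult_left_le[of a "\<rho> - 1"] by linarith
  finally have "(\<rho> * a - u)\<^sup>2 \<le> (\<rho> - 1 + e)\<^sup>2"
    using power_mono[of "\<bar>\<rho> * a - u\<bar>" _ 2] by simp
  moreover have "(u - x)\<^sup>2 \<le> u * v + e * u - 2 * x * u + x\<^sup>2"
    using u uv mult_left_mono[of "u - v" e u] by (simp add: algebra_simps power2_eq_square)
  ultimately show ?thesis
    unfolding split using variance parallelogram by (smt (verit))
qed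

text \<open>Here \<open>(1 - r) / (1 - r ^ n) = 1/[n]\<^sub>r\<close>; the definition is the bound on the second
  central moment of the operator established in \<open>mweight_second_moment\<close>.\<close>

definition moment_bound :: "real \<Rightarrow> real \<Rightarrow> nat \<Rightarrow> real" where
  "moment_bound r p n = 2 * (1 / p - 1 + (1 - r) / (1 - r ^ n))\<^sup>2
     + (1 - r) / (1 - r ^ n) * (1 / p)\<^sup>2 + 2 * ((1 - r) / (1 - r ^ n))"

context qbase
begin

lemma one_minus_r_div_nonneg: "0 \<le> (1 - r) / (1 - r ^ n)"
  by (simp add: divide_nonneg_nonneg)

lemma qratio_pred_diff:
  assumes "0 < n"
  shows "qratio r n k - qratio r n (k - 1) \<le> (1 - r) / (1 - r ^ n)"
  using qratio_Suc_right_diff(2)[OF assms, of "k - 1"] one_minus_r_div_nonneg[of n]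
  by (cases k) auto

lemma moment_bound_nonneg: "0 < p \<Longrightarrow> 0 \<le> moment_bound r p n"
  unfolding moment_bound_def using one_minus_r_div_nonneg[of n]
  by (intro add_nonneg_nonneg mult_nonneg_nonneg) simp_all

lemma bweight_second_moment_sums:
  "(\<lambda>j. bweight r n k j * (r ^ j / p - x)\<^sup>2) sums
     (qratio r (Suc n) (Suc k) * qratio r (Suc n) (Suc (Suc k)) * (1 / p)\<^sup>2
       - 2 * x * (1 / p) * qratio r (Suc n) (Suc k) + x\<^sup>2)"
proof -
  have "(\<lambda>j. bweight r n k j * (r ^ j)\<^sup>2 * (1 / p)\<^sup>2 - bweight r n k j * r ^ j * (2 * x * (1 / p))
      + bweight r n k j * x\<^sup>2) sums
      (qratio r (Suc n) (Suc k) * qratio r (Suc n) (Suc (Suc k)) * (1 / p)\<^sup>2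
       - qratio r (Suc n) (Suc k) * (2 * x * (1 / p)) + 1 * x\<^sup>2)"
    by (intro sums_add sums_diff sums_mult2 bweight_sums bweight_mean_sums bweight_power2_sums)
  then show ?thesis
    by (simp add: power2_eq_square algebra_simps)
qed

lemma bweight_second_moment_le:
  assumes p: "0 < p" "p \<le> 1" and n: "0 < n"
  defines "e \<equiv> (1 - r) / (1 - r ^ n)"
  shows "qratio r (Suc n) (Suc k) * qratio r (Suc n) (Suc (Suc k)) * (1 / p)\<^sup>2
       - 2 * x * (1 / p) * qratio r (Suc n) (Suc k) + x\<^sup>2
    \<le> 2 * (1 / p - 1 + e)\<^sup>2 + e * (1 / p)\<^sup>2
       + 2 * (qratio r n k * qratio r n (k - 1) + e * qratio r n k - 2 * x * qratio r n k + x\<^sup>2)"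
proof (rule quadratic_deviation_le)
  show "0 \<le> qratio r (Suc n) (Suc k)" "qratio r (Suc n) (Suc k) \<le> 1"
    by (rule qratio_nonneg, rule qratio_le_1)
  show "0 \<le> qratio r (Suc n) (Suc (Suc k)) - qratio r (Suc n) (Suc k)"
    by (rule qratio_Suc_right_diff(1)) simp
  show "qratio r (Suc n) (Suc (Suc k)) - qratio r (Suc n) (Suc k) \<le> e"
    using qratio_Suc_right_diff(2)[of "Suc n" "Suc k"] one_minus_r_div_antimono[OF n, of "Suc n"]
    unfolding e_def by simp
  show "\<bar>qratio r (Suc n) (Suc k) - qratio r n k\<bar> \<le> e"
    unfolding e_def by (rule qratio_Suc_Suc_diff[OF n])
  show "0 \<le> qratio r n k"
    by (rule qratio_nonneg)
  show "qratio r n k - qratio r n (k - 1) \<le> e"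
    unfolding e_def by (rule qratio_pred_diff[OF n])
  show "1 \<le> 1 / p"
    using p by simp
qed

lemma mweight_second_moment:
  assumes p: "0 < p" "p \<le> 1" and n: "0 < n" and x: "0 \<le> x" "x < 1"
  defines "m k \<equiv> qratio r (Suc n) (Suc k) * qratio r (Suc n) (Suc (Suc k)) * (1 / p)\<^sup>2
       - 2 * x * (1 / p) * qratio r (Suc n) (Suc k) + x\<^sup>2"
  shows "summable (\<lambda>k. mweight r n x k * m k)"
    and "(\<Sum>k. mweight r n x k * m k) \<le> moment_bound r p n"
proof -
  define e where "e = (1 - r) / (1 - r ^ n)"
  define K where "K = 2 * (1 / p - 1 + e)\<^sup>2 + e * (1 / p)\<^sup>2"
  define R where "R k = mweight r n x k * K + 2 * (mweight r n x k * qratio r n k * qratio r n (k - 1))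
    + (2 * e - 4 * x) * (mweight r n x k * qratio r n k) + mweight r n x k * (2 * x\<^sup>2)" for k
  have "R sums (1 * K + 2 * x\<^sup>2 + (2 * e - 4 * x) * x + 1 * (2 * x\<^sup>2))"
    unfolding R_def
    by (intro sums_add sums_mult sums_mult2 mweight_sums mweight_qratio_sums
        mweight_qratio_qratio_sums x)
  then have R_sums: "R sums (K + 2 * e * x)"
    by (simp add: algebra_simps power2_eq_square)
  have m_nonneg: "0 \<le> m k" for k
  proof -
    have "(\<lambda>j. bweight r n k j * (r ^ j / p - x)\<^sup>2) sums m k"
      unfolding m_def by (rule bweight_second_moment_sums)
    from sums_le[OF _ sums_zero this] show ?thesis
      by (simp add: bweight_nonneg)
  qed
  have "R k = mweight r n x k * (K + 2 * (qratio r n k * qratio r n (k - 1)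
      + e * qratio r n k - 2 * x * qratio r n k + x\<^sup>2))" for k
    unfolding R_def by (simp add: algebra_simps)
  then have wm_le: "mweight r n x k * m k \<le> R k" for k
    using bweight_second_moment_le[OF p n, of k x] mweight_nonneg[OF x, of n k]
    unfolding m_def K_def e_def by (simp add: mult_left_mono)
  show summable: "summable (\<lambda>k. mweight r n x k * m k)"
    using wm_le mweight_nonneg[OF x] m_nonneg
    by (intro summable_comparison_test[OF _ sums_summable[OF R_sums]]) auto
  have "(\<Sum>k. mweight r n x k * m k) \<le> K + 2 * e * x"
    using suminf_le[OF wm_le summable sums_summable[OF R_sums]] sums_unique[OF R_sums] by simp
  also have "\<dots> \<le> K + 2 * e"
    using x one_minus_r_div_nonneg[of n] mult_left_le[of x e] unfolding e_def[symmetric] by simp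
  also have "\<dots> = moment_bound r p n"
    unfolding moment_bound_def K_def e_def by simp
  finally show "(\<Sum>k. mweight r n x k * m k) \<le> moment_bound r p n" .
qed

end

lemma sum_lessThan_Suc_id: "(\<Sum>j<Suc n. j) = n * (n + 1) div 2"
  using gauss_sum_nat[of n] by (simp add: atLeast0AtMost lessThan_Suc_atMost)

lemma real_sum_lessThan_id: "real (\<Sum>j<n. j) = real n * (real n - 1) / 2"
  by (induction n) (simp_all add: field_simps)

locale pq_pair = qbase r for r :: real +
  fixes p q :: real
  assumes p_pos: "0 < p" and q_eq: "q = p * r"
begin

lemma p_minus_q: "p - q = p * (1 - r)"
  unfolding q_eq by (simp add: algebra_simps)

lemma pq_int_eq: "pq_int p q m = p ^ m * (1 - r ^ m) / (p - q)"
  unfolding pq_int_def q_eq by (simp add: power_mult_distrib algebra_simps)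

lemma pq_int_pos: "0 < m \<Longrightarrow> 0 < pq_int p q m"
  unfolding pq_int_eq p_minus_q using p_pos by simp

lemma pq_fact_pos: "0 < pq_fact p q m"
  unfolding pq_fact_def using pq_int_pos by (intro prod_pos) auto

lemma pq_fact_Suc: "pq_fact p q (Suc m) = pq_fact p q m * pq_int p q (Suc m)"
  by (simp add: pq_fact_def)

lemma pq_binom_eq_qbinom: "pq_binom p q (n + k) k = p ^ (k * n) * qbinom r n k"
proof (induction k)
  case 0
  show ?case
    using pq_fact_pos[of n] by (simp add: pq_binom_def pq_fact_def[of p q 0])
next
  case (Suc k)
  have "pq_binom p q (n + Suc k) (Suc k) =
      pq_binom p q (n + k) k * (pq_int p q (n + Suc k) / pq_int p q (Suc k))"
    using pq_fact_pos[of k] pq_fact_pos[of n] pq_int_pos[of "Suc k"]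
    by (simp add: pq_binom_def pq_fact_Suc)
  also have "pq_int p q (n + Suc k) / pq_int p q (Suc k) =
      p ^ (n + Suc k) / p ^ Suc k * ((1 - r ^ (n + Suc k)) / (1 - r ^ Suc k))"
    unfolding pq_int_eq using p_minus_q p_pos by simp
  also have "p ^ (n + Suc k) / p ^ Suc k = p ^ n"
    using p_pos by (simp add: power_add)
  finally show ?case
    unfolding Suc qbinom_Suc_right by (simp add: power_add mult_ac)
qed

lemma pq_pow_eq_qpoch: "pq_pow p q 1 (- s) m = p ^ (\<Sum>j<m. j) * qpoch r s m"
proof (induction m)
  case (Suc m)
  have "p ^ m - q ^ m * s = p ^ m * (1 - r ^ m * s)"
    unfolding q_eq by (simp add: power_mult_distrib algebra_simps)
  then show ?case
    using Suc.IH by (simp add: pq_pow_def qpoch_Suc power_add mult_ac)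
qed (simp add: pq_pow_def qpoch_def)

lemma m_pq_eq_mweight: "m_pq p q n k x = mweight r n x k"
proof -
  have "(\<Sum>j<n + 1. j) = n * (n + 1) div 2"
    using sum_lessThan_Suc_id by simp
  then have "m_pq p q n k x = p ^ (k * n) * p ^ (n * (n + 1) div 2) / p ^ (k * n + n * (n + 1) div 2)
      * mweight r n x k"
    unfolding m_pq_def mweight_def pq_binom_eq_qbinom pq_pow_eq_qpoch
    by (simp add: mult_ac)
  then show ?thesis
    using p_pos by (simp add: power_add)
qed

lemma b_pq_eq: "b_pq p q n k s = p ^ (2 * k) * qbinom r (Suc n) k * s ^ k * qpoch r s n"
proof -
  define E where "E = real k * (real n - 1) + real n * (real n - 1) / 2"
  have "p ^ (k * Suc n) * p ^ (\<Sum>j<n. j) = p powr (real (k * Suc n) + real (\<Sum>j<n. j))"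
    unfolding powr_add powr_realpow[OF p_pos] ..
  then have "p ^ (k * Suc n) * p ^ (\<Sum>j<n. j) / p powr E
      = p powr (real (k * Suc n) + real (\<Sum>j<n. j) - E)"
    by (simp add: powr_diff)
  also have "real (k * Suc n) + real (\<Sum>j<n. j) - E = real (2 * k)"
    unfolding E_def real_sum_lessThan_id by (simp add: algebra_simps)
  also have "p powr real (2 * k) = p ^ (2 * k)"
    using p_pos by (rule powr_realpow)
  finally have "p ^ (k * Suc n) * p ^ (\<Sum>j<n. j) / p powr E = p ^ (2 * k)" .
  moreover have "pq_binom p q (n + k + 1) k = p ^ (k * Suc n) * qbinom r (Suc n) k"
    using pq_binom_eq_qbinom[of "Suc n" k] by simp
  then have "b_pq p q n k s = p ^ (k * Suc n) * p ^ (\<Sum>j<n. j) / p powr E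
      * (qbinom r (Suc n) k * s ^ k * qpoch r s n)"
    unfolding b_pq_def E_def[symmetric] pq_pow_eq_qpoch by (simp add: mult_ac)
  ultimately show ?thesis
    by (simp add: mult_ac)
qed

lemma pq_integral_b_pq:
  assumes "summable (\<lambda>j. bweight r n k j * g (r ^ j / p))"
  shows "pq_integral p q 1 (\<lambda>t. b_pq p q n k (q * t) * g t)
    = (p * q) ^ k * ((1 - r) / (1 - r ^ Suc n)) * (\<Sum>j. bweight r n k j * g (r ^ j / p))"
proof -
  define D where "D = 1 - r ^ Suc n"
  have D_pos: "0 < D"
    unfolding D_def by (rule one_minus_power_r_pos) simp
  have node: "q ^ j / p ^ (j + 1) = r ^ j / p" "q * (r ^ j / p) = r ^ Suc j" for j
    unfolding q_eq using p_pos by (simp_all add: power_mult_distrib)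
  have "q ^ j / p ^ (j + 1) * (b_pq p q n k (q * (q ^ j / p ^ (j + 1) * 1)) * g (q ^ j / p ^ (j + 1) * 1))
      = (p * q) ^ k / (p * D) * (bweight r n k j * g (r ^ j / p))" for j
    unfolding node mult_1_right b_pq_eq bweight_def D_def[symmetric]
    using p_pos D_pos q_eq by (simp add: field_simps power_mult_distrib power_add mult_2_right)
  then have "pq_integral p q 1 (\<lambda>t. b_pq p q n k (q * t) * g t)
      = (p - q) * (\<Sum>j. (p * q) ^ k / (p * D) * (bweight r n k j * g (r ^ j / p)))"
    by (simp add: pq_integral_def)
  also have "\<dots> = (p * q) ^ k * ((1 - r) / D) * (\<Sum>j. bweight r n k j * g (r ^ j / p))"
    unfolding suminf_mult[OF assms] p_minus_q using p_pos by simp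
  finally show ?thesis
    unfolding D_def .
qed

lemma M_pq_eq:
  assumes x: "0 \<le> x" "x < 1" and f_bounded: "\<And>t. \<bar>ext01 f t\<bar> \<le> B"
  shows "M_pq p q n f x = (\<Sum>k. mweight r n x k * (\<Sum>j. bweight r n k j * ext01 f (r ^ j / p)))"
proof -
  define I where "I k = (\<Sum>j. bweight r n k j * ext01 f (r ^ j / p))" for k
  define c where "c = (1 - r) / (1 - r ^ Suc n)"
  have summable_B: "summable (\<lambda>j. bweight r n k j * B)" for k
    using sums_summable[OF sums_mult2[OF bweight_sums, where c=B]] .
  have I: "summable (\<lambda>j. bweight r n k j * ext01 f (r ^ j / p))" "\<bar>I k\<bar> \<le> B" for k
    using weighted_mean_deviation[OF bweight_nonneg bweight_sums, of "\<lambda>j. ext01 f (r ^ j / p)" 0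
        "\<lambda>_. B" n k] f_bounded summable_B[of k] sums_unique[OF sums_mult2[OF bweight_sums, where c=B]]
    unfolding I_def by auto
  have summable_wI: "summable (\<lambda>k. mweight r n x k * I k)"
    using weighted_mean_deviation(1)[OF mweight_nonneg[OF x] mweight_sums[OF x], of I 0 "\<lambda>_. B"]
      I(2) sums_summable[OF sums_mult2[OF mweight_sums[OF x], where c=B]] by simp
  have "m_pq p q n k x * (p * q) powi (- int k) * pq_integral p q 1 (\<lambda>t. b_pq p q n k (q * t) * ext01 f t)
      = c * (mweight r n x k * I k)" for k
    unfolding m_pq_eq_mweight pq_integral_b_pq[OF I(1)] c_def I_def
    using p_pos q_eq by (simp add: power_int_minus_divide)
  then have "M_pq p q n f x = pq_int p q (n + 1) / p ^ n * c * (\<Sum>k. mweight r n x k * I k)"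
    using x suminf_mult[OF summable_wI, of c] by (simp add: M_pq_def)
  also have "pq_int p q (n + 1) / p ^ n * c = 1"
    unfolding c_def pq_int_eq p_minus_q using p_pos one_minus_power_r_pos[of "Suc n"] by simp
  finally show ?thesis
    unfolding I_def by simp
qed

end

context pq_pair
begin

lemma one_minus_r_div_le_inverse_pq_int:
  assumes "p \<le> 1" "0 < n"
  shows "(1 - r) / (1 - r ^ n) \<le> 1 / pq_int p q n"
proof -
  have "p ^ n \<le> p"
    using assms p_pos power_decreasing[of 1 n p] by simp
  then have "1 \<le> p / p ^ n"
    using p_pos by simp
  then have "(1 - r) / (1 - r ^ n) * 1 \<le> (1 - r) / (1 - r ^ n) * (p / p ^ n)"
    using one_minus_r_div_nonneg by (intro mult_left_mono) auto
  also have "\<dots> = 1 / pq_int p q n"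
    unfolding pq_int_eq p_minus_q by (simp add: mult.commute)
  finally show ?thesis by simp
qed

lemma M_pq_deviation_le:
  assumes p: "p \<le> 1" and n: "0 < n" and x: "0 \<le> x" "x < 1"
    and f_bounded: "\<And>t. \<bar>ext01 f t\<bar> \<le> B"
    and modulus: "\<And>t. \<bar>ext01 f t - f x\<bar> \<le> \<epsilon> + c * (t - x)\<^sup>2" and c: "0 \<le> c"
  shows "\<bar>M_pq p q n f x - f x\<bar> \<le> \<epsilon> + c * moment_bound r p n"
proof -
  define m where "m k = qratio r (Suc n) (Suc k) * qratio r (Suc n) (Suc (Suc k)) * (1 / p)\<^sup>2
       - 2 * x * (1 / p) * qratio r (Suc n) (Suc k) + x\<^sup>2" for k
  note second_moment = mweight_second_moment[OF p_pos p n x, folded m_def]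
  have "\<bar>M_pq p q n f x - f x\<bar> \<le> \<epsilon> + c * (\<Sum>k. mweight r n x k * m k)"
    unfolding M_pq_eq[OF x f_bounded]
    by (rule double_average_deviation[OF mweight_nonneg[OF x] mweight_sums[OF x] bweight_nonneg
          bweight_sums _ second_moment(1) modulus c])
      (unfold m_def, rule bweight_second_moment_sums)
  also have "\<dots> \<le> \<epsilon> + c * moment_bound r p n"
    using second_moment(2) c by (simp add: mult_left_mono)
  finally show ?thesis .
qed

end

lemma ext01_quadratic_modulus:
  assumes f: "continuous_on {0..1} f" and \<epsilon>: "0 < \<epsilon>"
  obtains B c where "0 \<le> c" "\<And>t. \<bar>ext01 f t\<bar> \<le> B"
    "\<And>x t. x \<in> {0..1} \<Longrightarrow> \<bar>ext01 f t - f x\<bar> \<le> \<epsilon> + c * (t - x)\<^sup>2"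
proof -
  obtain B where B: "\<And>x. x \<in> {0..1} \<Longrightarrow> \<bar>f x\<bar> \<le> B"
    using compact_imp_bounded[OF compact_continuous_image[OF f compact_Icc]]
    unfolding bounded_iff real_norm_def by blast
  obtain d where d: "0 < d" "\<And>x x'. x \<in> {0..1} \<Longrightarrow> x' \<in> {0..1} \<Longrightarrow> dist x' x < d
      \<Longrightarrow> dist (f x') (f x) < \<epsilon>"
    using compact_uniformly_continuous[OF f compact_Icc] \<epsilon>
    unfolding uniformly_continuous_on_def by metis
  define c where "c = 2 * B / d\<^sup>2"
  have ext01_bounded: "\<bar>ext01 f t\<bar> \<le> B" for t
    unfolding ext01_def by (rule B) auto
  have "0 \<le> B"
    using B[of 0] by simp
  then have c_nonneg: "0 \<le> c"
    unfolding c_def by simp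
  have "\<bar>ext01 f t - f x\<bar> \<le> \<epsilon> + c * (t - x)\<^sup>2" if x: "x \<in> {0..1}" for x t
  proof -
    define t' where "t' = max 0 (min 1 t)"
    have t': "t' \<in> {0..1}" "\<bar>t' - x\<bar> \<le> \<bar>t - x\<bar>"
      using x unfolding t'_def by (auto simp: abs_le_iff)
    show ?thesis
    proof (cases "\<bar>t' - x\<bar> < d")
      case True
      then show ?thesis
        using d(2)[OF x t'(1)] c_nonneg unfolding ext01_def t'_def[symmetric]
        by (simp add: dist_real_def add_increasing2)
    next
      case False
      then have "d\<^sup>2 \<le> (t - x)\<^sup>2"
        using t'(2) d(1) power_mono[of d "\<bar>t - x\<bar>" 2] by simp
      then have "2 * B \<le> c * (t - x)\<^sup>2"
        using d(1) c_nonneg mult_left_mono[of "d\<^sup>2" "(t - x)\<^sup>2" c] unfolding c_def by simp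
      moreover have "\<bar>ext01 f t - f x\<bar> \<le> 2 * B"
        using ext01_bounded[of t] B[OF x] by linarith
      ultimately show ?thesis
        using \<epsilon> by linarith
    qed
  qed
  with c_nonneg ext01_bounded that show ?thesis by blast
qed

lemma pq_pair_ratio:
  assumes "0 < q" "q < p"
  shows "pq_pair (q / p) p q"
  using assms by unfold_locales auto

lemma M_pq_deviation_le_on_unit_interval:
  assumes pq: "0 < q" "q < p" "p \<le> 1" and n: "0 < n" and x: "x \<in> {0..1}"
    and f_bounded: "\<And>t. \<bar>ext01 f t\<bar> \<le> B"
    and modulus: "\<And>x t. x \<in> {0..1} \<Longrightarrow> \<bar>ext01 f t - f x\<bar> \<le> \<epsilon> + c * (t - x)\<^sup>2"
    and c: "0 \<le> c" and \<epsilon>: "0 \<le> \<epsilon>"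
  shows "\<bar>M_pq p q n f x - f x\<bar> \<le> \<epsilon> + c * moment_bound (q / p) p n"
proof (cases "x = 1")
  case True
  then show ?thesis
    using qbase.moment_bound_nonneg[OF pq_pair.axioms(1)[OF pq_pair_ratio[OF pq(1,2)]], of p n]
      pq c \<epsilon> by (simp add: M_pq_def)
next
  case False
  then show ?thesis
    using pq_pair.M_pq_deviation_le[OF pq_pair_ratio[OF pq(1,2)] pq(3) n _ _ f_bounded
        modulus[OF x] c] x by simp
qed

lemma moment_bound_tendsto_0:
  fixes p q :: "nat \<Rightarrow> real"
  assumes pq: "\<And>n. 0 < q n" "\<And>n. q n < p n" "\<And>n. p n \<le> 1" and "p \<longlonglongrightarrow> 1"
    and "(\<lambda>n. 1 / pq_int (p n) (q n) n) \<longlonglongrightarrow> 0"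
  shows "(\<lambda>n. moment_bound (q n / p n) (p n) n) \<longlonglongrightarrow> 0"
proof -
  define e where "e n = (1 - q n / p n) / (1 - (q n / p n) ^ n)" for n
  have "e \<longlonglongrightarrow> 0"
  proof (rule Lim_null_comparison[OF _ assms(5)])
    show "\<forall>\<^sub>F n in sequentially. norm (e n) \<le> 1 / pq_int (p n) (q n) n"
      using eventually_gt_at_top[of 0]
    proof eventually_elim
      case (elim n)
      interpret pq_pair "q n / p n" "p n" "q n"
        using pq_pair_ratio pq by blast
      have "0 \<le> e n"
        unfolding e_def by (rule one_minus_r_div_nonneg)
      then show ?case
        using one_minus_r_div_le_inverse_pq_int[OF pq(3) elim] by (simp add: e_def)
    qed
  qed
  then have "(\<lambda>n. 2 * (1 / p n - 1 + e n)\<^sup>2 + e n * (1 / p n)\<^sup>2 + 2 * e n)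
      \<longlonglongrightarrow> 2 * (1 / 1 - 1 + 0)\<^sup>2 + 0 * (1 / 1)\<^sup>2 + 2 * 0"
    by (intro tendsto_intros assms(4)) simp_all
  then show ?thesis
    unfolding moment_bound_def e_def[symmetric] by simp
qed

lemma uniform_limit_from_moment_bound:
  fixes F :: "nat \<Rightarrow> real \<Rightarrow> real" and \<beta> :: "nat \<Rightarrow> real"
  assumes "\<beta> \<longlonglongrightarrow> 0"
    and bound: "\<And>\<epsilon>. 0 < \<epsilon> \<Longrightarrow>
      \<exists>c. \<forall>\<^sub>F n in sequentially. \<forall>x\<in>S. \<bar>F n x - f x\<bar> \<le> \<epsilon> + c * \<beta> n"
  shows "uniform_limit S F f sequentially"
  unfolding uniform_limit_iff
proof (intro allI impI)
  fix \<epsilon> :: real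
  assume "0 < \<epsilon>"
  then obtain c where c: "\<forall>\<^sub>F n in sequentially. \<forall>x\<in>S. \<bar>F n x - f x\<bar> \<le> \<epsilon> / 2 + c * \<beta> n"
    using bound[of "\<epsilon> / 2"] by auto
  moreover have "\<forall>\<^sub>F n in sequentially. c * \<beta> n < \<epsilon> / 2"
    using order_tendstoD(2)[OF tendsto_mult_right_zero[OF assms(1)], of "\<epsilon> / 2" c] \<open>0 < \<epsilon>\<close>
    by linarith
  ultimately show "\<forall>\<^sub>F n in sequentially. \<forall>x\<in>S. dist (F n x) (f x) < \<epsilon>"
    by eventually_elim (auto simp: dist_real_def)
qed

theorem theorem2:
  fixes p q :: "nat \<Rightarrow> real" and a b :: real and f :: "real \<Rightarrow> real"
  assumes "\<And>n. 0 < q n \<and> q n < 1"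
    and "\<And>n. q n < p n \<and> p n \<le> 1"
    and "p \<longlonglongrightarrow> 1" and "q \<longlonglongrightarrow> 1"
    and "(\<lambda>n. p n ^ n) \<longlonglongrightarrow> a"
    and "(\<lambda>n. q n ^ n) \<longlonglongrightarrow> b"
    and "(\<lambda>n. 1 / pq_int (p n) (q n) n) \<longlonglongrightarrow> 0"
    and "continuous_on {0..1} f"
  shows "uniform_limit {0..1} (\<lambda>n x. M_pq (p n) (q n) n f x) f sequentially"
proof (rule uniform_limit_from_moment_bound[OF moment_bound_tendsto_0])
  show "\<And>n. 0 < q n" "\<And>n. q n < p n" "\<And>n. p n \<le> 1"
    using assms(1,2) by auto
  fix \<epsilon> :: real
  assume "0 < \<epsilon>"
  then obtain B c where c: "0 \<le> c" and f_bounded: "\<And>t. \<bar>ext01 f t\<bar> \<le> B"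
    and modulus: "\<And>x t. x \<in> {0..1} \<Longrightarrow> \<bar>ext01 f t - f x\<bar> \<le> \<epsilon> + c * (t - x)\<^sup>2"
    using ext01_quadratic_modulus[OF assms(8)] by metis
  have "\<forall>\<^sub>F n in sequentially. \<forall>x\<in>{0..1}.
      \<bar>M_pq (p n) (q n) n f x - f x\<bar> \<le> \<epsilon> + c * moment_bound (q n / p n) (p n) n"
    using eventually_gt_at_top[of 0]
  proof eventually_elim
    case (elim n)
    show ?case
      using M_pq_deviation_le_on_unit_interval[OF _ _ _ elim _ f_bounded modulus c] assms(1,2)[of n]
        \<open>0 < \<epsilon>\<close> by auto
  qed
  then show "\<exists>c. \<forall>\<^sub>F n in sequentially. \<forall>x\<in>{0..1}.
      \<bar>M_pq (p n) (q n) n f x - f x\<bar> \<le> \<epsilon> + c * moment_bound (q n / p n) (p n) n"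
    by blast
qed (use assms(3,7) in auto)

end
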